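(* Let $G=(V,A)$ be a directed graph in which each arc $(i,j)\in A$ carries basic costs $c_{ij}=(c^{ij}_1,\ldots,c^{ij}_r)\in\mathbb{R}^r$. Let $w=(o_w,d_w)$ be an origin–destination pair, and let $\Pi_w$ be the finite set of elementary directed paths from $o_w$ to $d_w$. For $\pi\in\Pi_w$ and $h\in\{1,\ldots,r\}$, let $\lambda_h(\pi)=\sum_{(i,j)\in\pi}c^{ij}_h$. Assume that there do not exist two distinct paths $\pi,\pi'\in\Pi_w$ with $\lambda_h(\pi)=\lambda_h(\pi')$ for all $h\in\{1,\ldots,r\}$. For $p\in\Delta_r$, let $S(w,p)$ be the set of paths in $\Pi_w$ minimizing $\sum_{h=1}^r p_h\lambda_h(\pi)$, that is, the shortest paths when arc $(i,j)$ has cost $c_{ij}^\top p$. Then the set $$\{p\in\Delta_r : |S(w,p)|>1\}$$ has null measure in $\Delta_r$.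
   Context: $\Delta_r=\{p\in\mathbb{R}^r_{\ge0} : \sum_{h=1}^r p_h=1\}$ is the unit simplex. It is an $(r-1)$-dimensional set, and measure on it is the $(r-1)$-dimensional Lebesgue measure. *)

theory Defs
  imports "HOL-Analysis.Analysis"
begin

text \<open>Directed graph given by its (finite) arc set A :: ('v \<times> 'v) set.
  Criteria are indexed by h \<in> {..<r} (i.e. 0,...,r-1 instead of 1,...,r).
  Basic arc costs: c :: 'v \<times> 'v \<Rightarrow> nat \<Rightarrow> real, c (i,j) h = c^{ij}_h.\<close>

definition elem_paths :: "('v \<times> 'v) set \<Rightarrow> 'v \<Rightarrow> 'v \<Rightarrow> 'v list set" where
  "elem_paths A o' d = {xs. xs \<noteq> [] \<and> hd xs = o' \<and> last xs = d \<and> distinct xs \<and>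
      (\<forall>e \<in> set (zip xs (tl xs)). e \<in> A)}"

definition path_arcs :: "'v list \<Rightarrow> ('v \<times> 'v) list" where
  "path_arcs xs = zip xs (tl xs)"

definition path_cost :: "('v \<times> 'v \<Rightarrow> nat \<Rightarrow> real) \<Rightarrow> nat \<Rightarrow> 'v list \<Rightarrow> real" where
  "path_cost c h xs = sum_list (map (\<lambda>e. c e h) (path_arcs xs))"

definition scal_cost :: "nat \<Rightarrow> ('v \<times> 'v \<Rightarrow> nat \<Rightarrow> real) \<Rightarrow> (nat \<Rightarrow> real) \<Rightarrow> 'v list \<Rightarrow> real" where
  "scal_cost r c p xs = (\<Sum>h<r. p h * path_cost c h xs)"

definition shortest_paths ::
  "('v \<times> 'v) set \<Rightarrow> nat \<Rightarrow> ('v \<times> 'v \<Rightarrow> nat \<Rightarrow> real) \<Rightarrow> 'v \<Rightarrow> 'v \<Rightarrow> (nat \<Rightarrow> real) \<Rightarrow> 'v list set" where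
  "shortest_paths A r c o' d p = {xs \<in> elem_paths A o' d.
      \<forall>ys \<in> elem_paths A o' d. scal_cost r c p xs \<le> scal_cost r c p ys}"

definition unit_simplex :: "nat \<Rightarrow> (nat \<Rightarrow> real) set" where
  "unit_simplex r = {p. (\<forall>h<r. 0 \<le> p h) \<and> (\<Sum>h<r. p h) = 1 \<and> (\<forall>h\<ge>r. p h = 0)}"

text \<open>A subset X of \<Delta>_r has null (r-1)-dimensional Lebesgue measure:
  its image under the affine chart p \<mapsto> (p_0,...,p_{r-2}) (dropping the last coordinate,
  which is determined by the others) is a null set of (r-1)-dimensional Lebesgue measure.\<close>
definition simplex_null :: "nat \<Rightarrow> (nat \<Rightarrow> real) set \<Rightarrow> bool" where
  "simplex_null r X \<longleftrightarrow>
     (\<lambda>p. restrict p {..<r-1}) ` X \<in> null_sets (PiM {..<r-1} (\<lambda>_. lborel))"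

end

theory Submission
  imports Defs
begin

text \<open>Drop the last weight: on the simplex the scalarised cost of a path is then an affine function of the
  remaining r - 1 weights. Two distinct paths can be simultaneously shortest only where their affine
  costs agree, and because their cost vectors differ this is a proper hyperplane (or empty), which is
  null by Fubini. There are finitely many pairs of paths, so the tie set is null.\<close>

lemma null_sets_PiM_lborel_hyperplane:
  fixes a :: "nat \<Rightarrow> real"
  assumes nontrivial: "(\<exists>k<n. a k \<noteq> 0) \<or> b \<noteq> 0"
  shows "{q \<in> space (PiM {..<n} (\<lambda>_. lborel)). (\<Sum>h<n. q h * a h) = b}
           \<in> null_sets (PiM {..<n} (\<lambda>_. lborel))"
proof (cases "\<exists>k<n. a k \<noteq> 0")
  case False
  with nontrivial have "b \<noteq> 0" by blast
  with False show ?thesis by simp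
next
  case True
  then obtain k where k: "k < n" "a k \<noteq> 0" by blast
  interpret product_sigma_finite "\<lambda>_. lborel :: real measure" by standard
  define I where "I = {..<n} - {k}"
  have I: "insert k I = {..<n}" "finite I" "k \<notin> I" using k by (auto simp: I_def)
  define H where "H = {q \<in> space (PiM {..<n} (\<lambda>_. lborel)). (\<Sum>h<n. q h * a h) = b}"
  have H_sets: "H \<in> sets (PiM {..<n} (\<lambda>_. lborel))" unfolding H_def by measurable
  \<comment> \<open>Fubini along coordinate k: every section of H in that direction is a single point.\<close>
  have point_sections:
    "(\<lambda>y. indicator H (x(k := y))) = (indicator {(b - (\<Sum>h\<in>I. x h * a h)) / a k} :: real \<Rightarrow> ennreal)"
    if x: "x \<in> space (PiM I (\<lambda>_. lborel :: real measure))" for x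
  proof
    fix y
    have "(\<Sum>h<n. (x(k := y)) h * a h) = y * a k + (\<Sum>h\<in>I. x h * a h)"
      unfolding I(1)[symmetric] using I(2,3) by (auto intro!: sum.cong)
    moreover have "x(k := y) \<in> space (PiM {..<n} (\<lambda>_. lborel :: real measure))"
      using x I k by (auto simp: space_PiM PiE_def extensional_def)
    ultimately show
      "indicator H (x(k := y)) = (indicator {(b - (\<Sum>h\<in>I. x h * a h)) / a k} y :: ennreal)"
      using k by (auto simp: H_def indicator_def field_simps)
  qed
  have "emeasure (PiM {..<n} (\<lambda>_. lborel)) H =
      (\<integral>\<^sup>+ x. indicator H x \<partial>PiM (insert k I) (\<lambda>_. lborel))"
    using H_sets I by (subst nn_integral_indicator) auto
  also have "\<dots> = (\<integral>\<^sup>+ x. (\<integral>\<^sup>+ y. indicator H (x(k := y)) \<partial>lborel) \<partial>PiM I (\<lambda>_. lborel))"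
    using I H_sets by (subst product_nn_integral_insert) auto
  also have "\<dots> = (\<integral>\<^sup>+ x. 0 \<partial>PiM I (\<lambda>_. lborel :: real measure))"
    by (intro nn_integral_cong) (simp add: point_sections)
  also have "\<dots> = 0" by simp
  finally show ?thesis using H_sets unfolding H_def by (simp add: null_sets_def)
qed

lemma null_sets_PiM_lborel_affine_ties:
  fixes a :: "'a \<Rightarrow> nat \<Rightarrow> real" and b :: "'a \<Rightarrow> real"
  assumes "finite P"
    and distinct: "\<And>\<pi> \<pi>'. \<pi> \<in> P \<Longrightarrow> \<pi>' \<in> P \<Longrightarrow> \<pi> \<noteq> \<pi>' \<Longrightarrow> (\<exists>h<n. a \<pi> h \<noteq> a \<pi>' h) \<or> b \<pi> \<noteq> b \<pi>'"
  shows "{q \<in> space (PiM {..<n} (\<lambda>_. lborel)). \<exists>\<pi>\<in>P. \<exists>\<pi>'\<in>P. \<pi> \<noteq> \<pi>' \<and>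
            (\<Sum>h<n. q h * a \<pi> h) + b \<pi> = (\<Sum>h<n. q h * a \<pi>' h) + b \<pi>'}
         \<in> null_sets (PiM {..<n} (\<lambda>_. lborel))"
proof -
  define H where "H \<pi> \<pi>' = {q \<in> space (PiM {..<n} (\<lambda>_. lborel)).
      (\<Sum>h<n. q h * (a \<pi> h - a \<pi>' h)) = b \<pi>' - b \<pi>}" for \<pi> \<pi>'
  have hyperplane_iff: "(\<Sum>h<n. q h * (a \<pi> h - a \<pi>' h)) = b \<pi>' - b \<pi> \<longleftrightarrow>
      (\<Sum>h<n. q h * a \<pi> h) + b \<pi> = (\<Sum>h<n. q h * a \<pi>' h) + b \<pi>'" for q \<pi> \<pi>'
    unfolding right_diff_distrib sum_subtractf by linarith
  have "{q \<in> space (PiM {..<n} (\<lambda>_. lborel)). \<exists>\<pi>\<in>P. \<exists>\<pi>'\<in>P. \<pi> \<noteq> \<pi>' \<and>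
            (\<Sum>h<n. q h * a \<pi> h) + b \<pi> = (\<Sum>h<n. q h * a \<pi>' h) + b \<pi>'}
      = (\<Union>(\<pi>, \<pi>') \<in> {(\<pi>, \<pi>') \<in> P \<times> P. \<pi> \<noteq> \<pi>'}. H \<pi> \<pi>')"
    unfolding H_def hyperplane_iff by blast
  moreover have "H \<pi> \<pi>' \<in> null_sets (PiM {..<n} (\<lambda>_. lborel))"
    if "\<pi> \<in> P" "\<pi>' \<in> P" "\<pi> \<noteq> \<pi>'" for \<pi> \<pi>'
    unfolding H_def using distinct[OF that] by (intro null_sets_PiM_lborel_hyperplane) auto
  ultimately show ?thesis
    using \<open>finite P\<close>
    by (auto intro!: null_sets_UN' countable_finite intro: rev_finite_subset[of "P \<times> P"])
qed

lemma null_sets_PiM_lborel_tied_minimizers: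
  fixes F :: "'a \<Rightarrow> (nat \<Rightarrow> real) \<Rightarrow> real"
  assumes "finite P"
    and affine: "\<And>\<pi> q. F \<pi> q = (\<Sum>h<n. q h * a \<pi> h) + b \<pi>"
    and distinct: "\<And>\<pi> \<pi>'. \<pi> \<in> P \<Longrightarrow> \<pi>' \<in> P \<Longrightarrow> \<pi> \<noteq> \<pi>' \<Longrightarrow> (\<exists>h<n. a \<pi> h \<noteq> a \<pi>' h) \<or> b \<pi> \<noteq> b \<pi>'"
  shows "{q \<in> space (PiM {..<n} (\<lambda>_. lborel)).
            \<exists>\<pi>\<in>P. \<exists>\<pi>'\<in>P. \<pi> \<noteq> \<pi>' \<and> (\<forall>y\<in>P. F \<pi> q \<le> F y q \<and> F \<pi>' q \<le> F y q)}
         \<in> null_sets (PiM {..<n} (\<lambda>_. lborel))" (is "?tied \<in> _")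
proof (rule null_sets_subset)
  let ?ties = "{q \<in> space (PiM {..<n} (\<lambda>_. lborel)). \<exists>\<pi>\<in>P. \<exists>\<pi>'\<in>P. \<pi> \<noteq> \<pi>' \<and> F \<pi> q = F \<pi>' q}"
  show "?ties \<in> null_sets (PiM {..<n} (\<lambda>_. lborel))"
    unfolding affine using \<open>finite P\<close> distinct by (rule null_sets_PiM_lborel_affine_ties)
  have "F \<pi> \<in> borel_measurable (PiM {..<n} (\<lambda>_. lborel))" for \<pi>
    unfolding affine by measurable
  with \<open>finite P\<close> show "?tied \<in> sets (PiM {..<n} (\<lambda>_. lborel))"
    by (intro sets.sets_Collect_finite_Ex sets.sets_Collect_conj sets.sets_Collect_finite_All
        sets.sets_Collect_const borel_measurable_le) auto
  show "?tied \<subseteq> ?ties"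
  proof safe
    fix q \<pi> \<pi>' assume "\<pi> \<in> P" "\<pi>' \<in> P" "\<pi> \<noteq> \<pi>'" "\<forall>y\<in>P. F \<pi> q \<le> F y q \<and> F \<pi>' q \<le> F y q"
    then show "\<exists>\<pi>\<in>P. \<exists>\<pi>'\<in>P. \<pi> \<noteq> \<pi>' \<and> F \<pi> q = F \<pi>' q"
      by (meson order_antisym)
  qed
qed

definition simplex_chart_domain :: "nat \<Rightarrow> (nat \<Rightarrow> real) set" where
  "simplex_chart_domain n =
     {q \<in> space (PiM {..<n} (\<lambda>_. lborel)). (\<forall>h<n. 0 \<le> q h) \<and> (\<Sum>h<n. q h) \<le> 1}"

definition simplex_from_chart :: "nat \<Rightarrow> (nat \<Rightarrow> real) \<Rightarrow> nat \<Rightarrow> real" where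
  "simplex_from_chart n q h = (if h < n then q h else if h = n then 1 - (\<Sum>i<n. q i) else 0)"

lemma sets_simplex_chart_domain: "simplex_chart_domain n \<in> sets (PiM {..<n} (\<lambda>_. lborel))"
proof -
  have "(\<lambda>q. \<Sum>h<n. q h) \<in> borel_measurable (PiM {..<n} (\<lambda>_. lborel :: real measure))"
    by measurable
  then have "{q \<in> space (PiM {..<n} (\<lambda>_. lborel)). (\<forall>h\<in>{..<n}. 0 \<le> q h) \<and> (\<Sum>h<n. q h) \<le> (1::real)}
     \<in> sets (PiM {..<n} (\<lambda>_. lborel))"
    by (intro sets.sets_Collect_conj sets.sets_Collect_finite_All borel_measurable_le
        measurable_component_singleton[where M = "\<lambda>_. lborel", simplified]
        borel_measurable_const finite_lessThan) auto
  then show ?thesis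
    unfolding simplex_chart_domain_def by (simp only: lessThan_iff Ball_def)
qed

lemma restrict_unit_simplex_image:
  "(\<lambda>p. restrict p {..<n}) ` {p \<in> unit_simplex (Suc n). Q p} =
     simplex_chart_domain n \<inter> {q. Q (simplex_from_chart n q)}"
  (is "?image = ?chart_image")
proof (intro equalityI subsetI)
  fix q assume "q \<in> ?image"
  then obtain p where p: "p \<in> unit_simplex (Suc n)" "Q p" and q: "q = restrict p {..<n}"
    by blast
  have "simplex_from_chart n q = p"
    using p(1) unfolding q by (auto simp: simplex_from_chart_def unit_simplex_def)
  moreover have "(\<Sum>h<n. p h) \<le> 1" "\<forall>h<n. 0 \<le> p h"
    using p(1) by (auto simp: unit_simplex_def)
  ultimately show "q \<in> ?chart_image"
    using p(2) unfolding q by (simp add: simplex_chart_domain_def space_PiM)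
next
  fix q assume q: "q \<in> ?chart_image"
  then have "restrict (simplex_from_chart n q) {..<n} = q"
    by (auto simp: simplex_chart_domain_def space_PiM PiE_def extensional_def simplex_from_chart_def)
  moreover have "simplex_from_chart n q \<in> unit_simplex (Suc n)"
    using q by (auto simp: simplex_chart_domain_def simplex_from_chart_def unit_simplex_def)
  ultimately show "q \<in> ?image"
    using q by (intro image_eqI[where x = "simplex_from_chart n q"]) auto
qed

lemma scal_cost_simplex_from_chart:
  "scal_cost (Suc n) c (simplex_from_chart n q) xs =
     (\<Sum>h<n. q h * (path_cost c h xs - path_cost c n xs)) + path_cost c n xs"
  by (simp add: scal_cost_def simplex_from_chart_def sum_subtractf
      sum_distrib_left algebra_simps)

lemma chart_coefficients_neq:
  fixes u v :: "nat \<Rightarrow> real"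
  assumes "\<exists>h<Suc n. u h \<noteq> v h"
  shows "(\<exists>h<n. u h - u n \<noteq> v h - v n) \<or> u n \<noteq> v n"
  using assms less_Suc_eq by auto

lemma set_subset_hd_snd_arcs: "xs \<noteq> [] \<Longrightarrow> set xs \<subseteq> insert (hd xs) (snd ` set (path_arcs xs))"
  by (cases xs) (auto simp: path_arcs_def map_snd_zip_take simp flip: set_map)

lemma finite_elem_paths:
  assumes "finite A"
  shows "finite (elem_paths A o' d)"
proof (rule finite_subset)
  show "elem_paths A o' d \<subseteq> {xs. set xs \<subseteq> insert o' (snd ` A) \<and> distinct xs}"
    using set_subset_hd_snd_arcs by (fastforce simp: elem_paths_def path_arcs_def)
  show "finite {xs. set xs \<subseteq> insert o' (snd ` A) \<and> distinct xs}"
    using assms by (intro finite_subset_distinct) auto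
qed

lemma one_less_card_minimizers_iff:
  fixes f :: "'a \<Rightarrow> 'b::linorder"
  assumes "finite P"
  shows "1 < card {x \<in> P. \<forall>y\<in>P. f x \<le> f y} \<longleftrightarrow>
           (\<exists>x\<in>P. \<exists>x'\<in>P. x \<noteq> x' \<and> (\<forall>y\<in>P. f x \<le> f y \<and> f x' \<le> f y))"
  using assms card_le_Suc0_iff_eq[of "{x \<in> P. \<forall>y\<in>P. f x \<le> f y}"]
  by (auto simp: not_le[symmetric])

theorem lemma1:
  fixes A :: "('v \<times> 'v) set" and c :: "'v \<times> 'v \<Rightarrow> nat \<Rightarrow> real"
    and r :: nat and o' d :: 'v
  assumes "finite A"
    and "\<not> (\<exists>\<pi> \<in> elem_paths A o' d. \<exists>\<pi>' \<in> elem_paths A o' d.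
              \<pi> \<noteq> \<pi>' \<and> (\<forall>h<r. path_cost c h \<pi> = path_cost c h \<pi>'))"
  shows "simplex_null r {p \<in> unit_simplex r. card (shortest_paths A r c o' d p) > 1}"
proof (cases r)
  case 0
  then show ?thesis by (simp add: simplex_null_def unit_simplex_def)
next
  case (Suc n)
  define P where "P = elem_paths A o' d"
  define F where "F \<pi> q = scal_cost r c (simplex_from_chart n q) \<pi>" for \<pi> q
  have "finite P" unfolding P_def using assms(1) by (rule finite_elem_paths)
  have ties_iff: "1 < card (shortest_paths A r c o' d (simplex_from_chart n q)) \<longleftrightarrow>
      (\<exists>\<pi>\<in>P. \<exists>\<pi>'\<in>P. \<pi> \<noteq> \<pi>' \<and> (\<forall>y\<in>P. F \<pi> q \<le> F y q \<and> F \<pi>' q \<le> F y q))" for q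
    unfolding shortest_paths_def F_def P_def[symmetric]
    by (rule one_less_card_minimizers_iff[OF \<open>finite P\<close>])
  define T where "T = {q \<in> space (PiM {..<n} (\<lambda>_. lborel)).
      \<exists>\<pi>\<in>P. \<exists>\<pi>'\<in>P. \<pi> \<noteq> \<pi>' \<and> (\<forall>y\<in>P. F \<pi> q \<le> F y q \<and> F \<pi>' q \<le> F y q)}"
  have image: "(\<lambda>p. restrict p {..<n}) ` {p \<in> unit_simplex r. card (shortest_paths A r c o' d p) > 1}
      = simplex_chart_domain n \<inter> T"
    using ties_iff unfolding T_def Suc restrict_unit_simplex_image
    by (auto simp: simplex_chart_domain_def)
  have "T \<in> null_sets (PiM {..<n} (\<lambda>_. lborel))"
    unfolding T_def
  proof (rule null_sets_PiM_lborel_tied_minimizers[OF \<open>finite P\<close>])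
    show "F \<pi> q = (\<Sum>h<n. q h * (path_cost c h \<pi> - path_cost c n \<pi>)) + path_cost c n \<pi>" for \<pi> q
      unfolding F_def Suc by (rule scal_cost_simplex_from_chart)
    show "(\<exists>h<n. path_cost c h \<pi> - path_cost c n \<pi> \<noteq> path_cost c h \<pi>' - path_cost c n \<pi>') \<or>
        path_cost c n \<pi> \<noteq> path_cost c n \<pi>'" if "\<pi> \<in> P" "\<pi>' \<in> P" "\<pi> \<noteq> \<pi>'" for \<pi> \<pi>'
      using assms(2) that unfolding P_def Suc by (intro chart_coefficients_neq) blast
  qed
  with image show ?thesis
    unfolding simplex_null_def Suc diff_Suc_1 by (simp add: null_set_Int1 sets_simplex_chart_domain)
qed

end
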